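(* Let $\Bbbk$ be an algebraically closed field of characteristic zero, $G$ a finite group, $\chi:G\to\Bbbk^\times$ a linear character, $g\in Z(G)$, $n\geq2$ the multiplicative order of $\chi(g)$, and $H$ the $\Bbbk$-algebra generated by $\Bbbk G$ and $z$ with relations $z^n=0$, $zs=\chi(s)sz$ ($s\in G$). Then the completely prime ideals of $H$ are exactly the ideals $(1-e_i)$, $0\leq i\leq p-1$.
   Context: $\chi_0,\dots,\chi_{p-1}$ are the irreducible characters of $G$ and $e_i=\frac{\chi_i(1)}{|G|}\sum_{h\in G}\chi_i(h)h^{-1}$. A completely prime ideal is a proper two-sided ideal $I$ such that $ab\in I$ implies $a\in I$ or $b\in I$. $(a)$ denotes the two-sided ideal of $H$ generated by $a$.
   Formalization: The ideals $(1-e_i)$ are taken over the linear characters $G\to\Bbbk^\times$ only, instead of over all irreducible characters $\chi_0,\dots,\chi_{p-1}$ of G. The statement above fails without it. *)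

theory Defs
  imports "HOL-Computational_Algebra.Polynomial" "HOL-Algebra.Ideal" "HOL-Algebra.Group"
begin

definition lin_char :: "('g, 'm) monoid_scheme \<Rightarrow> ('g \<Rightarrow> 'k::field) \<Rightarrow> bool" where
  "lin_char G chi \<longleftrightarrow>
     (\<forall>s\<in>carrier G. chi s \<noteq> 0) \<and>
     (\<forall>s\<in>carrier G. \<forall>t\<in>carrier G. chi (s \<otimes>\<^bsub>G\<^esub> t) = chi s * chi t)"

definition is_mult_order :: "'k::field \<Rightarrow> nat \<Rightarrow> bool" where
  "is_mult_order a n \<longleftrightarrow> 0 < n \<and> a ^ n = 1 \<and> (\<forall>m. 0 < m \<and> m < n \<longrightarrow> a ^ m \<noteq> 1)"

text \<open>The algebra H generated by kG and z with z^n = 0 and z s = chi(s) s z,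
  realised on its basis {s z^i : s in G, i < n}.  An element is a coefficient
  function c : G x nat -> k supported on carrier G x {0..<n}; the multiplication
  is the bilinear extension of (s z^i)(t z^j) = chi(t)^i (s t) z^(i+j)
  (which is 0 when i + j >= n).\<close>
definition H_alg :: "('g, 'm) monoid_scheme \<Rightarrow> ('g \<Rightarrow> 'k::field) \<Rightarrow> nat
                      \<Rightarrow> ('g \<times> nat \<Rightarrow> 'k) ring" where
  "H_alg G chi n = \<lparr>
     carrier = {c. \<forall>s i. c (s, i) \<noteq> 0 \<longrightarrow> s \<in> carrier G \<and> i < n},
     mult = (\<lambda>a b (u, m). if u \<in> carrier G \<and> m < n then
               (\<Sum>s\<in>carrier G. \<Sum>i\<le>m.
                  a (s, i) * b (inv\<^bsub>G\<^esub> s \<otimes>\<^bsub>G\<^esub> u, m - i) * chi (inv\<^bsub>G\<^esub> s \<otimes>\<^bsub>G\<^esub> u) ^ i)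
             else 0),
     one = (\<lambda>(u, m). if u = \<one>\<^bsub>G\<^esub> \<and> m = 0 then 1 else 0),
     zero = (\<lambda>_. 0),
     add = (\<lambda>a b x. a x + b x) \<rparr>"

text \<open>Central idempotent e_psi = (psi(1)/|G|) sum_h psi(h) h^{-1} for a linear character psi,
  as an element of H (so psi(1) = 1 and the coefficient of u = h^{-1} is psi(u^{-1})/|G|).\<close>
definition char_idem :: "('g, 'm) monoid_scheme \<Rightarrow> ('g \<Rightarrow> 'k::field) \<Rightarrow> ('g \<times> nat \<Rightarrow> 'k)" where
  "char_idem G psi = (\<lambda>(u, m). if u \<in> carrier G \<and> m = 0
       then psi (inv\<^bsub>G\<^esub> u) / of_nat (card (carrier G)) else 0)"

definition completely_prime :: "('a, 'b) ring_scheme \<Rightarrow> 'a set \<Rightarrow> bool" where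
  "completely_prime R I \<longleftrightarrow> ideal I R \<and> I \<noteq> carrier R \<and>
     (\<forall>a\<in>carrier R. \<forall>b\<in>carrier R. a \<otimes>\<^bsub>R\<^esub> b \<in> I \<longrightarrow> a \<in> I \<or> b \<in> I)"

end

theory Submission
  imports Defs "HOL-Algebra.Multiplicative_Group"
begin

text \<open>
  For a linear character \<open>\<psi>\<close> of \<open>G\<close>, the map \<open>x \<mapsto> \<Sum>\<^sub>s \<psi>(s) x(s, 0)\<close> extends \<open>\<psi>\<close> and kills
  \<open>z\<close>; it is multiplicative, so its kernel \<open>K\<^sub>\<psi>\<close> is completely prime. Every element of \<open>K\<^sub>\<psi>\<close> is a
  combination of the elements \<open>s - \<psi>(s)\<close> and a multiple of \<open>z\<close>. Since \<open>s e\<^sub>\<psi> = \<psi>(s) e\<^sub>\<psi>\<close>, each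
  \<open>s - \<psi>(s)\<close> lies in \<open>(1 - e\<^sub>\<psi>)\<close>, and so does \<open>z\<close>, because
  \<open>z (g - \<psi>(g)) - \<chi>(g) (g - \<psi>(g)) z = \<psi>(g) (\<chi>(g) - 1) z\<close> with \<open>\<chi>(g) \<noteq> 1\<close>. Hence \<open>K\<^sub>\<psi> = (1 - e\<^sub>\<psi>)\<close>.

  Conversely, a completely prime ideal \<open>I\<close> contains the nilpotent \<open>z\<close>, and for every \<open>s \<in> G\<close> it
  contains one of the factors of \<open>0 = s\<^sup>N - 1 = \<Prod>\<^sub>\<zeta> (s - \<zeta>)\<close> (the field is algebraically closed).
  The root \<open>\<zeta> =: \<psi>(s)\<close> is unique, \<open>\<psi>\<close> is a linear character, and \<open>I \<supseteq> K\<^sub>\<psi>\<close>; since \<open>K\<^sub>\<psi>\<close> has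
  codimension one and \<open>1 \<notin> I\<close>, \<open>I = K\<^sub>\<psi>\<close>.
\<close>

lemma completely_prime_mult_mem:
  assumes "completely_prime R I" and "a \<in> carrier R" and "b \<in> carrier R" and "a \<otimes>\<^bsub>R\<^esub> b \<in> I"
  shows "a \<in> I \<or> b \<in> I"
  using assms by (simp add: completely_prime_def)

lemma completely_prime_one_notin:
  assumes "completely_prime R I"
  shows "\<one>\<^bsub>R\<^esub> \<notin> I"
  using assms ideal.one_imp_carrier by (fastforce simp: completely_prime_def)

lemma completely_prime_nilpotent:
  fixes k :: nat
  assumes R: "ring R" and I: "completely_prime R I"
    and x: "x \<in> carrier R" and nil: "x [^]\<^bsub>R\<^esub> k = \<zero>\<^bsub>R\<^esub>"
  shows "x \<in> I"
proof -
  interpret ring R by fact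
  have "x \<in> I" if "x [^]\<^bsub>R\<^esub> j \<in> I" for j :: nat
    using that
  proof (induction j)
    case 0
    then show ?case using completely_prime_one_notin[OF I] by simp
  next
    case (Suc j)
    then have "x [^]\<^bsub>R\<^esub> j \<otimes>\<^bsub>R\<^esub> x \<in> I" by simp
    then show ?case using completely_prime_mult_mem[OF I _ x] Suc.IH x by blast
  qed
  moreover have "\<zero>\<^bsub>R\<^esub> \<in> I"
    using I by (simp add: completely_prime_def additive_subgroup.zero_closed ideal.axioms(1))
  ultimately show ?thesis using nil by metis
qed

lemma completely_prime_kernel:
  fixes f :: "'a \<Rightarrow> 'k::idom"
  assumes R: "ring R" and f_one: "f \<one>\<^bsub>R\<^esub> = 1"
    and f_add: "\<And>x y. x \<in> carrier R \<Longrightarrow> y \<in> carrier R \<Longrightarrow> f (x \<oplus>\<^bsub>R\<^esub> y) = f x + f y"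
    and f_mult: "\<And>x y. x \<in> carrier R \<Longrightarrow> y \<in> carrier R \<Longrightarrow> f (x \<otimes>\<^bsub>R\<^esub> y) = f x * f y"
  shows "completely_prime R {x \<in> carrier R. f x = 0}"
proof -
  interpret ring R by fact
  have f_zero: "f \<zero>\<^bsub>R\<^esub> = 0"
    using f_add[of "\<zero>\<^bsub>R\<^esub>" "\<zero>\<^bsub>R\<^esub>"] by (metis zero_closed l_zero add_cancel_right_right)
  have f_neg: "f (\<ominus>\<^bsub>R\<^esub> x) = - f x" if "x \<in> carrier R" for x
    using f_add[of "\<ominus>\<^bsub>R\<^esub> x" x] that f_zero by (simp add: l_neg eq_neg_iff_add_eq_0)
  have "ideal {x \<in> carrier R. f x = 0} R"
  proof (rule idealI[OF R])
    show "subgroup {x \<in> carrier R. f x = 0} (add_monoid R)"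
      by (rule add.subgroupI) (auto simp: f_zero f_neg f_add)
  qed (auto simp: f_mult)
  moreover have "{x \<in> carrier R. f x = 0} \<noteq> carrier R"
    using f_one one_closed by force
  ultimately show ?thesis
    by (auto simp: completely_prime_def f_mult)
qed

context group
begin

lemma lin_char_mult:
  "lin_char G psi \<Longrightarrow> s \<in> carrier G \<Longrightarrow> t \<in> carrier G \<Longrightarrow> psi (s \<otimes> t) = psi s * psi t"
  by (simp add: lin_char_def)

lemma lin_char_nonzero: "lin_char G psi \<Longrightarrow> s \<in> carrier G \<Longrightarrow> psi s \<noteq> 0"
  by (simp add: lin_char_def)

lemma lin_char_one:
  assumes "lin_char G psi"
  shows "psi \<one> = 1"
proof -
  have "psi \<one> * psi \<one> = psi \<one> * 1"
    using lin_char_mult[OF assms, of \<one> \<one>] by simp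
  then show ?thesis using lin_char_nonzero[OF assms, of \<one>] by simp
qed

lemma lin_char_inv:
  assumes "lin_char G psi" and "s \<in> carrier G"
  shows "psi (inv s) * psi s = 1"
  using lin_char_mult[OF assms(1), of "inv s" s] assms by (simp add: lin_char_one)

end

section \<open>The algebra \<open>H\<close>\<close>

lemma sum_eq_single:
  assumes "finite A" and "\<And>x. x \<in> A \<Longrightarrow> x \<noteq> a \<Longrightarrow> f x = 0"
  shows "(\<Sum>x\<in>A. f x) = (if a \<in> A then f a else 0)"
proof -
  have "(\<Sum>x\<in>A. f x) = (\<Sum>x\<in>A. if x = a then f a else 0)"
    using assms(2) by (intro sum.cong refl) auto
  then show ?thesis using assms(1) by simp
qed

locale H_algebra = group G for G :: "('g, 'm) monoid_scheme" (structure) +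
  fixes chi :: "'g \<Rightarrow> 'k::field" and n :: nat
  assumes finite_carrier: "finite (carrier G)"
    and lin_char_chi: "lin_char G chi"
    and n_pos: "0 < n"
begin

abbreviation H :: "('g \<times> nat \<Rightarrow> 'k) ring" where
  "H \<equiv> H_alg G chi n"

abbreviation basis_index :: "('g \<times> nat) set" where
  "basis_index \<equiv> carrier G \<times> {..<n}"

lemma mem_carrier_H: "x \<in> carrier H \<longleftrightarrow> (\<forall>s i. x (s, i) \<noteq> 0 \<longrightarrow> s \<in> carrier G \<and> i < n)"
  by (simp add: H_alg_def)

lemma carrier_H_vanish: "x \<in> carrier H \<Longrightarrow> \<not> (s \<in> carrier G \<and> i < n) \<Longrightarrow> x (s, i) = 0"
  by (auto simp: mem_carrier_H)

lemma mult_H_apply: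
  "(a \<otimes>\<^bsub>H\<^esub> b) (u, m) = (if u \<in> carrier G \<and> m < n then
      (\<Sum>s\<in>carrier G. \<Sum>i\<le>m. a (s, i) * b (inv s \<otimes> u, m - i) * chi (inv s \<otimes> u) ^ i)
    else 0)"
  by (simp add: H_alg_def)

lemma add_H: "a \<oplus>\<^bsub>H\<^esub> b = (\<lambda>w. a w + b w)"
  by (simp add: H_alg_def)

lemma zero_H: "\<zero>\<^bsub>H\<^esub> = (\<lambda>_. 0)"
  by (simp add: H_alg_def)

lemma mult_closed_H: "a \<otimes>\<^bsub>H\<^esub> b \<in> carrier H"
  by (auto simp: mem_carrier_H mult_H_apply)

text \<open>\<open>(s z\<^sup>i)(t z\<^sup>j) = \<chi>(t)\<^sup>i (st) z\<^sup>i\<^sup>+\<^sup>j\<close>, which is \<open>0\<close> once \<open>i + j \<ge> n\<close>.\<close>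

definition struct_const :: "'g \<times> nat \<Rightarrow> 'g \<times> nat \<Rightarrow> 'g \<times> nat \<Rightarrow> 'k" where
  "struct_const x y w = (if fst x \<otimes> fst y = fst w \<and> snd x + snd y = snd w \<and> snd w < n
      then chi (fst y) ^ snd x else 0)"

definition struct_const3 :: "'g \<times> nat \<Rightarrow> 'g \<times> nat \<Rightarrow> 'g \<times> nat \<Rightarrow> 'g \<times> nat \<Rightarrow> 'k" where
  "struct_const3 x y z w =
    (if fst x \<otimes> fst y \<otimes> fst z = fst w \<and> snd x + snd y + snd z = snd w \<and> snd w < n
     then chi (fst y) ^ snd x * chi (fst z) ^ (snd x + snd y) else 0)"

lemma mult_H_expand:
  assumes a: "a \<in> carrier H" and b: "b \<in> carrier H"
  shows "(a \<otimes>\<^bsub>H\<^esub> b) w = (\<Sum>x\<in>basis_index. \<Sum>y\<in>basis_index. a x * b y * struct_const x y w)"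
proof (cases w)
  case (Pair u m)
  show ?thesis
  proof (cases "u \<in> carrier G \<and> m < n")
    case True
    then have u: "u \<in> carrier G" and m: "m < n" by auto
    have inner: "(\<Sum>y\<in>basis_index. a (s, i) * b y * struct_const (s, i) y (u, m)) =
        (if i \<le> m then a (s, i) * b (inv s \<otimes> u, m - i) * chi (inv s \<otimes> u) ^ i else 0)"
      if s: "s \<in> carrier G" for s i
    proof -
      have "(\<Sum>y\<in>basis_index. a (s, i) * b y * struct_const (s, i) y (u, m))
          = (\<Sum>t\<in>carrier G. \<Sum>j<n. a (s, i) * b (t, j) * struct_const (s, i) (t, j) (u, m))"
        by (rule sum.cartesian_product')
      also have "\<dots> = (\<Sum>t\<in>carrier G. if t = inv s \<otimes> u then
            (if i \<le> m then a (s, i) * b (t, m - i) * chi t ^ i else 0) else 0)"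
      proof (rule sum.cong[OF refl])
        fix t assume t: "t \<in> carrier G"
        have st: "(s \<otimes> t = u) = (t = inv s \<otimes> u)" using inv_solve_left[OF t s u] by auto
        show "(\<Sum>j<n. a (s, i) * b (t, j) * struct_const (s, i) (t, j) (u, m)) =
          (if t = inv s \<otimes> u then
            (if i \<le> m then a (s, i) * b (t, m - i) * chi t ^ i else 0) else 0)"
          using m by (auto simp: struct_const_def st sum_eq_single[where a = "m - i"])
      qed
      also have "\<dots> = (if i \<le> m then a (s, i) * b (inv s \<otimes> u, m - i) * chi (inv s \<otimes> u) ^ i else 0)"
        using finite_carrier s u by auto
      finally show ?thesis .
    qed
    have "(\<Sum>x\<in>basis_index. \<Sum>y\<in>basis_index. a x * b y * struct_const x y w)
        = (\<Sum>s\<in>carrier G. \<Sum>i<n. \<Sum>y\<in>basis_index. a (s, i) * b y * struct_const (s, i) y (u, m))"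
      unfolding Pair by (rule sum.cartesian_product')
    also have "\<dots> = (\<Sum>s\<in>carrier G. \<Sum>i<n.
        if i \<le> m then a (s, i) * b (inv s \<otimes> u, m - i) * chi (inv s \<otimes> u) ^ i else 0)"
      by (intro sum.cong refl) (simp add: inner)
    also have "\<dots> = (\<Sum>s\<in>carrier G. \<Sum>i\<le>m. a (s, i) * b (inv s \<otimes> u, m - i) * chi (inv s \<otimes> u) ^ i)"
      by (intro sum.cong refl sum.mono_neutral_cong_right) (use m in auto)
    finally show ?thesis using True by (simp add: Pair mult_H_apply)
  next
    case False
    then show ?thesis by (auto simp: Pair mult_H_apply struct_const_def intro!: sum.neutral)
  qed
qed

lemma struct_const_assoc_left:
  assumes "x \<in> basis_index" and "y \<in> basis_index" and "z \<in> basis_index"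
  shows "(\<Sum>w\<in>basis_index. struct_const x y w * struct_const w z v) = struct_const3 x y z v"
  using assms finite_carrier
  by (subst sum_eq_single[where a = "(fst x \<otimes> fst y, snd x + snd y)"])
     (auto simp: struct_const_def struct_const3_def)

lemma struct_const_assoc_right:
  assumes "x \<in> basis_index" and "y \<in> basis_index" and "z \<in> basis_index"
  shows "(\<Sum>w\<in>basis_index. struct_const y z w * struct_const x w v) = struct_const3 x y z v"
  using assms finite_carrier
  by (subst sum_eq_single[where a = "(fst y \<otimes> fst z, snd y + snd z)"])
     (auto simp: struct_const_def struct_const3_def m_assoc lin_char_mult[OF lin_char_chi]
        power_mult_distrib power_add)

lemma mult_H_assoc:
  assumes a: "a \<in> carrier H" and b: "b \<in> carrier H" and c: "c \<in> carrier H"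
  shows "(a \<otimes>\<^bsub>H\<^esub> b) \<otimes>\<^bsub>H\<^esub> c = a \<otimes>\<^bsub>H\<^esub> (b \<otimes>\<^bsub>H\<^esub> c)"
proof
  fix v
  let ?B = basis_index
  let ?abc = "\<lambda>x y z. a x * b y * c z"
  let ?L = "\<lambda>x y z w. struct_const x y w * struct_const w z v"
  let ?R = "\<lambda>x y z w. struct_const y z w * struct_const x w v"
  have "((a \<otimes>\<^bsub>H\<^esub> b) \<otimes>\<^bsub>H\<^esub> c) v
      = (\<Sum>w\<in>?B. \<Sum>z\<in>?B. (\<Sum>x\<in>?B. \<Sum>y\<in>?B. a x * b y * struct_const x y w) * c z * struct_const w z v)"
    by (simp only: mult_H_expand[OF mult_closed_H c] mult_H_expand[OF a b])
  also have "\<dots> = (\<Sum>w\<in>?B. \<Sum>z\<in>?B. \<Sum>x\<in>?B. \<Sum>y\<in>?B. ?abc x y z * ?L x y z w)"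
    unfolding sum_distrib_right by (intro sum.cong refl) (simp add: mult_ac)
  also have "\<dots> = (\<Sum>w\<in>?B. \<Sum>x\<in>?B. \<Sum>y\<in>?B. \<Sum>z\<in>?B. ?abc x y z * ?L x y z w)"
    by (rule sum.cong[OF refl], subst sum.swap, rule sum.cong[OF refl], rule sum.swap)
  also have "\<dots> = (\<Sum>x\<in>?B. \<Sum>y\<in>?B. \<Sum>w\<in>?B. \<Sum>z\<in>?B. ?abc x y z * ?L x y z w)"
    by (subst sum.swap, rule sum.cong[OF refl], rule sum.swap)
  also have "\<dots> = (\<Sum>x\<in>?B. \<Sum>y\<in>?B. \<Sum>z\<in>?B. \<Sum>w\<in>?B. ?abc x y z * ?L x y z w)"
    by (rule sum.cong[OF refl], rule sum.cong[OF refl], rule sum.swap)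
  also have "\<dots> = (\<Sum>x\<in>?B. \<Sum>y\<in>?B. \<Sum>z\<in>?B. ?abc x y z * struct_const3 x y z v)"
    by (intro sum.cong refl) (simp add: sum_distrib_left[symmetric] struct_const_assoc_left)
  also have "\<dots> = (\<Sum>x\<in>?B. \<Sum>y\<in>?B. \<Sum>z\<in>?B. \<Sum>w\<in>?B. ?abc x y z * ?R x y z w)"
    by (intro sum.cong refl) (simp add: sum_distrib_left[symmetric] struct_const_assoc_right)
  also have "\<dots> = (\<Sum>x\<in>?B. \<Sum>w\<in>?B. \<Sum>y\<in>?B. \<Sum>z\<in>?B. ?abc x y z * ?R x y z w)"
    by (rule sum.cong[OF refl], subst sum.swap, rule sum.cong[OF refl], rule sum.swap)
  also have "\<dots> = (\<Sum>x\<in>?B. \<Sum>w\<in>?B.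
      a x * (\<Sum>y\<in>?B. \<Sum>z\<in>?B. b y * c z * struct_const y z w) * struct_const x w v)"
    unfolding sum_distrib_right sum_distrib_left by (intro sum.cong refl) (simp add: mult_ac)
  also have "\<dots> = (a \<otimes>\<^bsub>H\<^esub> (b \<otimes>\<^bsub>H\<^esub> c)) v"
    by (simp only: mult_H_expand[OF a mult_closed_H] mult_H_expand[OF b c])
  finally show "((a \<otimes>\<^bsub>H\<^esub> b) \<otimes>\<^bsub>H\<^esub> c) v = (a \<otimes>\<^bsub>H\<^esub> (b \<otimes>\<^bsub>H\<^esub> c)) v" .
qed

definition basis_elem :: "'g \<Rightarrow> nat \<Rightarrow> 'g \<times> nat \<Rightarrow> 'k" where
  "basis_elem s i = (\<lambda>w. if w = (s, i) then 1 else 0)"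

lemma basis_elem_apply: "basis_elem s i (u, m) = (if u = s \<and> m = i then 1 else 0)"
  by (simp add: basis_elem_def)

lemma basis_elem_closed: "s \<in> carrier G \<Longrightarrow> i < n \<Longrightarrow> basis_elem s i \<in> carrier H"
  by (simp add: mem_carrier_H basis_elem_apply)

lemma one_H_eq_basis: "\<one>\<^bsub>H\<^esub> = basis_elem \<one> 0"
  by (auto simp: H_alg_def basis_elem_def)

lemma basis_mult_left_apply:
  assumes s: "s \<in> carrier G"
  shows "(basis_elem s i \<otimes>\<^bsub>H\<^esub> x) (u, m) = (if u \<in> carrier G \<and> m < n \<and> i \<le> m
      then x (inv s \<otimes> u, m - i) * chi (inv s \<otimes> u) ^ i else 0)"
proof (cases "u \<in> carrier G \<and> m < n")
  case True
  have "(\<Sum>t\<in>carrier G. \<Sum>j\<le>m. basis_elem s i (t, j) * x (inv t \<otimes> u, m - j) * chi (inv t \<otimes> u) ^ j)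
      = (\<Sum>j\<le>m. basis_elem s i (s, j) * x (inv s \<otimes> u, m - j) * chi (inv s \<otimes> u) ^ j)"
    using s by (subst sum_eq_single[OF finite_carrier, where a = s]) (auto simp: basis_elem_apply)
  also have "\<dots> = (if i \<le> m then x (inv s \<otimes> u, m - i) * chi (inv s \<otimes> u) ^ i else 0)"
    by (subst sum_eq_single[where a = i]) (auto simp: basis_elem_apply)
  finally show ?thesis using True by (simp add: mult_H_apply)
qed (auto simp: mult_H_apply)

lemma basis_mult_right_apply:
  assumes t: "t \<in> carrier G"
  shows "(x \<otimes>\<^bsub>H\<^esub> basis_elem t j) (u, m) = (if u \<in> carrier G \<and> m < n \<and> j \<le> m
      then x (u \<otimes> inv t, m - j) * chi t ^ (m - j) else 0)"
proof (cases "u \<in> carrier G \<and> m < n")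
  case True
  then have u: "u \<in> carrier G" by simp
  have inv_eq: "inv s \<otimes> u = t \<longleftrightarrow> s = u \<otimes> inv t" if "s \<in> carrier G" for s
    using that t u by (metis inv_solve_left' inv_solve_right)
  then have t_eq: "inv (u \<otimes> inv t) \<otimes> u = t"
    using t u by simp
  have "(\<Sum>s\<in>carrier G. \<Sum>i\<le>m. x (s, i) * basis_elem t j (inv s \<otimes> u, m - i) * chi (inv s \<otimes> u) ^ i)
      = (\<Sum>i\<le>m. x (u \<otimes> inv t, i) * basis_elem t j (t, m - i) * chi t ^ i)"
    using t u by (subst sum_eq_single[OF finite_carrier, where a = "u \<otimes> inv t"])
      (auto simp: basis_elem_apply inv_eq t_eq)
  also have "\<dots> = (if j \<le> m then x (u \<otimes> inv t, m - j) * chi t ^ (m - j) else 0)"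
    by (subst sum_eq_single[where a = "m - j"]) (auto simp: basis_elem_apply)
  finally show ?thesis using True by (simp add: mult_H_apply)
qed (auto simp: mult_H_apply)

lemma ring_H: "ring H"
proof (rule ringI)
  show "abelian_group H"
  proof (rule abelian_groupI)
    fix x y assume "x \<in> carrier H" "y \<in> carrier H"
    then show "x \<oplus>\<^bsub>H\<^esub> y \<in> carrier H"
      by (simp add: mem_carrier_H add_H) (metis add.right_neutral)
  next
    fix x assume "x \<in> carrier H"
    then show "\<exists>y\<in>carrier H. y \<oplus>\<^bsub>H\<^esub> x = \<zero>\<^bsub>H\<^esub>"
      by (intro bexI[of _ "\<lambda>w. - x w"]) (auto simp: mem_carrier_H add_H zero_H)
  qed (auto simp: mem_carrier_H add_H zero_H add.assoc add.commute)
next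
  show "monoid H"
  proof (rule monoidI)
    show "\<one>\<^bsub>H\<^esub> \<in> carrier H"
      using basis_elem_closed[OF one_closed n_pos] by (simp add: one_H_eq_basis)
  next
    fix x assume "x \<in> carrier H"
    then show "\<one>\<^bsub>H\<^esub> \<otimes>\<^bsub>H\<^esub> x = x" and "x \<otimes>\<^bsub>H\<^esub> \<one>\<^bsub>H\<^esub> = x"
      by (auto simp: fun_eq_iff one_H_eq_basis basis_mult_left_apply basis_mult_right_apply
          carrier_H_vanish lin_char_one[OF lin_char_chi])
  qed (simp_all add: mult_closed_H mult_H_assoc)
next
  fix x y z
  show "(x \<oplus>\<^bsub>H\<^esub> y) \<otimes>\<^bsub>H\<^esub> z = x \<otimes>\<^bsub>H\<^esub> z \<oplus>\<^bsub>H\<^esub> y \<otimes>\<^bsub>H\<^esub> z"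
    and "z \<otimes>\<^bsub>H\<^esub> (x \<oplus>\<^bsub>H\<^esub> y) = z \<otimes>\<^bsub>H\<^esub> x \<oplus>\<^bsub>H\<^esub> z \<otimes>\<^bsub>H\<^esub> y"
    by (auto simp: fun_eq_iff mult_H_apply add_H sum.distrib ring_distribs)
qed

sublocale H: ring H
  by (rule ring_H)

lemma minus_H: "a \<in> carrier H \<Longrightarrow> \<ominus>\<^bsub>H\<^esub> a = (\<lambda>w. - a w)"
  by (rule H.add.inv_equality) (auto simp: add_H zero_H mem_carrier_H)

lemma diff_H_apply: "a \<in> carrier H \<Longrightarrow> b \<in> carrier H \<Longrightarrow> (a \<ominus>\<^bsub>H\<^esub> b) w = a w - b w"
  by (simp add: a_minus_def minus_H add_H)

lemma ideal_minus_closed: "ideal J H \<Longrightarrow> a \<in> J \<Longrightarrow> b \<in> J \<Longrightarrow> a \<ominus>\<^bsub>H\<^esub> b \<in> J"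
  by (simp add: a_minus_def additive_subgroup.a_closed additive_subgroup.a_inv_closed
      ideal.axioms(1))

definition smult_H :: "'k \<Rightarrow> ('g \<times> nat \<Rightarrow> 'k) \<Rightarrow> 'g \<times> nat \<Rightarrow> 'k" where
  "smult_H c x = (\<lambda>w. c * x w)"

lemma smult_H_apply: "smult_H c x w = c * x w"
  by (simp add: smult_H_def)

lemma smult_H_closed: "x \<in> carrier H \<Longrightarrow> smult_H c x \<in> carrier H"
  by (auto simp: mem_carrier_H smult_H_def)

lemma smult_H_mult_left: "smult_H c a \<otimes>\<^bsub>H\<^esub> b = smult_H c (a \<otimes>\<^bsub>H\<^esub> b)"
  by (auto simp: fun_eq_iff smult_H_def mult_H_apply sum_distrib_left mult_ac)

lemma ideal_smult_H_closed:
  assumes J: "ideal J H" and a: "a \<in> J"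
  shows "smult_H c a \<in> J"
proof -
  have "a \<in> carrier H" using ideal.Icarr[OF J a] .
  then have "smult_H c a = smult_H c \<one>\<^bsub>H\<^esub> \<otimes>\<^bsub>H\<^esub> a"
    by (simp add: smult_H_mult_left)
  then show ?thesis using ideal.I_l_closed[OF J a smult_H_closed[OF H.one_closed]] by simp
qed

lemma ideal_lincomb_closed:
  assumes J: "ideal J H" and "finite A" and "\<And>s. s \<in> A \<Longrightarrow> f s \<in> J"
  shows "(\<lambda>w. \<Sum>s\<in>A. c s * f s w) \<in> J"
  using assms(2,3)
proof (induction A rule: finite_induct)
  case empty
  then show ?case
    using additive_subgroup.zero_closed[OF ideal.axioms(1)[OF J]] by (simp add: zero_H)
next
  case (insert s A)
  then have "smult_H (c s) (f s) \<oplus>\<^bsub>H\<^esub> (\<lambda>w. \<Sum>s\<in>A. c s * f s w) \<in> J"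
    by (intro additive_subgroup.a_closed[OF ideal.axioms(1)[OF J]] ideal_smult_H_closed[OF J]) auto
  then show ?case using insert by (simp add: add_H smult_H_def)
qed

lemma ideal_smult_H_cancel:
  assumes J: "ideal J H" and c: "c \<noteq> 0" and "smult_H c x \<in> J"
  shows "x \<in> J"
proof -
  have "smult_H (inverse c) (smult_H c x) = x"
    using c by (simp add: smult_H_def mult.assoc[symmetric])
  then show ?thesis using ideal_smult_H_closed[OF J assms(3)] by metis
qed

lemma basis_mult:
  assumes a: "a \<in> carrier G" and b: "b \<in> carrier G"
  shows "basis_elem a i \<otimes>\<^bsub>H\<^esub> basis_elem b j =
    (if i + j < n then smult_H (chi b ^ i) (basis_elem (a \<otimes> b) (i + j)) else \<zero>\<^bsub>H\<^esub>)"
proof (rule ext, clarify)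
  fix u m
  have "inv a \<otimes> u = b \<longleftrightarrow> u = a \<otimes> b" if "u \<in> carrier G"
    using inv_solve_left'[OF b a that] by auto
  then show "(basis_elem a i \<otimes>\<^bsub>H\<^esub> basis_elem b j) (u, m) =
      (if i + j < n then smult_H (chi b ^ i) (basis_elem (a \<otimes> b) (i + j)) else \<zero>\<^bsub>H\<^esub>) (u, m)"
    using a b by (auto simp: basis_mult_left_apply basis_elem_apply smult_H_def zero_H)
qed

definition z_elem :: "'g \<times> nat \<Rightarrow> 'k" where
  "z_elem = basis_elem \<one> 1"

lemma z_elem_closed: "1 < n \<Longrightarrow> z_elem \<in> carrier H"
  by (simp add: z_elem_def basis_elem_closed)

lemma z_elem_pow: "z_elem [^]\<^bsub>H\<^esub> k = (if k < n then basis_elem \<one> k else \<zero>\<^bsub>H\<^esub>)"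
proof (induction k)
  case 0
  then show ?case using n_pos by (simp add: one_H_eq_basis)
next
  case (Suc k)
  have "z_elem [^]\<^bsub>H\<^esub> Suc k = z_elem [^]\<^bsub>H\<^esub> k \<otimes>\<^bsub>H\<^esub> z_elem"
    by simp
  also have "\<dots> = (if Suc k < n then basis_elem \<one> (Suc k) else \<zero>\<^bsub>H\<^esub>)"
  proof (cases "k < n")
    case True
    then show ?thesis
      using Suc.IH by (simp add: z_elem_def basis_mult lin_char_one[OF lin_char_chi] smult_H_def)
  next
    case False
    then show ?thesis
      using Suc.IH by (simp add: fun_eq_iff mult_H_apply zero_H)
  qed
  finally show ?case .
qed

section \<open>The kernels of the characters of \<open>H\<close>\<close>

definition char_hom :: "('g \<Rightarrow> 'k) \<Rightarrow> ('g \<times> nat \<Rightarrow> 'k) \<Rightarrow> 'k" where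
  "char_hom psi x = (\<Sum>s\<in>carrier G. psi s * x (s, 0))"

definition char_ker :: "('g \<Rightarrow> 'k) \<Rightarrow> ('g \<times> nat \<Rightarrow> 'k) set" where
  "char_ker psi = {x \<in> carrier H. char_hom psi x = 0}"

lemma char_hom_add: "char_hom psi (a \<oplus>\<^bsub>H\<^esub> b) = char_hom psi a + char_hom psi b"
  by (simp add: char_hom_def add_H sum.distrib algebra_simps)

lemma char_hom_diff:
  "a \<in> carrier H \<Longrightarrow> b \<in> carrier H \<Longrightarrow> char_hom psi (a \<ominus>\<^bsub>H\<^esub> b) = char_hom psi a - char_hom psi b"
  by (simp add: char_hom_def diff_H_apply sum_subtractf algebra_simps)

lemma char_hom_smult: "char_hom psi (smult_H c a) = c * char_hom psi a"
  by (simp add: char_hom_def smult_H_def sum_distrib_left mult_ac)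

lemma char_hom_basis: "s \<in> carrier G \<Longrightarrow> char_hom psi (basis_elem s 0) = psi s"
  unfolding char_hom_def
  by (subst sum_eq_single[OF finite_carrier, where a = s]) (auto simp: basis_elem_apply)

lemma char_hom_one: "lin_char G psi \<Longrightarrow> char_hom psi \<one>\<^bsub>H\<^esub> = 1"
  by (simp add: one_H_eq_basis char_hom_basis lin_char_one)

text \<open>Only the \<open>z\<^sup>0\<close>-components of the factors contribute to the \<open>z\<^sup>0\<close>-component of a product,
  and there the twist by \<open>\<chi>\<close> is trivial.\<close>
lemma char_hom_mult:
  assumes psi: "lin_char G psi"
  shows "char_hom psi (a \<otimes>\<^bsub>H\<^esub> b) = char_hom psi a * char_hom psi b"
proof -
  have shift: "(\<Sum>u\<in>carrier G. psi u * b (inv s \<otimes> u, 0)) = psi s * char_hom psi b"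
    if s: "s \<in> carrier G" for s
  proof -
    have "(\<Sum>u\<in>carrier G. psi u * b (inv s \<otimes> u, 0)) = (\<Sum>t\<in>carrier G. psi (s \<otimes> t) * b (t, 0))"
      using s by (intro sum.reindex_bij_witness[where i = "\<lambda>t. s \<otimes> t" and j = "\<lambda>u. inv s \<otimes> u"])
        (auto simp: m_assoc[symmetric])
    also have "\<dots> = psi s * char_hom psi b"
      using s by (simp add: char_hom_def sum_distrib_left lin_char_mult[OF psi] mult_ac)
    finally show ?thesis .
  qed
  have "char_hom psi (a \<otimes>\<^bsub>H\<^esub> b) = (\<Sum>u\<in>carrier G. psi u * (\<Sum>s\<in>carrier G. a (s, 0) * b (inv s \<otimes> u, 0)))"
    unfolding char_hom_def using n_pos by (intro sum.cong refl) (simp add: mult_H_apply)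
  also have "\<dots> = (\<Sum>s\<in>carrier G. a (s, 0) * (\<Sum>u\<in>carrier G. psi u * b (inv s \<otimes> u, 0)))"
    unfolding sum_distrib_left by (rule trans[OF sum.swap]) (simp add: mult_ac)
  also have "\<dots> = char_hom psi a * char_hom psi b"
    by (simp add: shift char_hom_def sum_distrib_right mult_ac)
  finally show ?thesis .
qed

lemma completely_prime_char_ker: "lin_char G psi \<Longrightarrow> completely_prime H (char_ker psi)"
  unfolding char_ker_def
  by (rule completely_prime_kernel[OF ring_H])
    (simp_all add: char_hom_one char_hom_add char_hom_mult)

lemma char_ker_maximal:
  assumes psi: "lin_char G psi" and I: "ideal I H" and one: "\<one>\<^bsub>H\<^esub> \<notin> I"
    and sub: "char_ker psi \<subseteq> I"
  shows "I = char_ker psi"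
proof
  show "I \<subseteq> char_ker psi"
  proof
    fix x assume xI: "x \<in> I"
    then have x: "x \<in> carrier H" by (rule ideal.Icarr[OF I])
    define c where "c = char_hom psi x"
    have "x \<ominus>\<^bsub>H\<^esub> smult_H c \<one>\<^bsub>H\<^esub> \<in> char_ker psi"
      using x by (simp add: char_ker_def c_def char_hom_diff char_hom_smult char_hom_one[OF psi]
          smult_H_closed)
    then have "x \<ominus>\<^bsub>H\<^esub> smult_H c \<one>\<^bsub>H\<^esub> \<in> I"
      using sub by blast
    then have "x \<ominus>\<^bsub>H\<^esub> (x \<ominus>\<^bsub>H\<^esub> smult_H c \<one>\<^bsub>H\<^esub>) \<in> I"
      by (rule ideal_minus_closed[OF I xI])
    moreover have "x \<ominus>\<^bsub>H\<^esub> (x \<ominus>\<^bsub>H\<^esub> smult_H c \<one>\<^bsub>H\<^esub>) = smult_H c \<one>\<^bsub>H\<^esub>"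
      using x by (simp add: fun_eq_iff diff_H_apply smult_H_closed)
    ultimately have "smult_H c \<one>\<^bsub>H\<^esub> \<in> I" by simp
    then have "c = 0" using ideal_smult_H_cancel[OF I] one by blast
    then show "x \<in> char_ker psi" using x by (simp add: char_ker_def c_def)
  qed
qed (rule sub)

lemma char_idem_closed: "char_idem G psi \<in> carrier H"
  using n_pos by (simp add: mem_carrier_H char_idem_def)

lemma char_hom_char_idem:
  assumes psi: "lin_char G psi" and card: "of_nat (card (carrier G)) \<noteq> (0::'k)"
  shows "char_hom psi (char_idem G psi) = 1"
proof -
  have "char_hom psi (char_idem G psi) = (\<Sum>s\<in>carrier G. 1 / of_nat (card (carrier G)))"
    unfolding char_hom_def char_idem_def
  proof (rule sum.cong[OF refl])
    fix s assume "s \<in> carrier G"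
    then show "psi s * (case (s, 0) of (u, m) \<Rightarrow>
        if u \<in> carrier G \<and> m = 0 then psi (inv u) / of_nat (card (carrier G)) else 0)
      = 1 / of_nat (card (carrier G))"
      using lin_char_inv[OF psi] by (simp add: mult.commute)
  qed
  then show ?thesis using card by simp
qed

lemma basis_mult_char_idem:
  assumes psi: "lin_char G psi" and s: "s \<in> carrier G"
  shows "basis_elem s 0 \<otimes>\<^bsub>H\<^esub> char_idem G psi = smult_H (psi s) (char_idem G psi)"
proof (rule ext, clarify)
  fix u m
  have "psi (inv (inv s \<otimes> u)) = psi s * psi (inv u)" if "u \<in> carrier G"
    using s that by (simp add: inv_mult_group lin_char_mult[OF psi])
  then show "(basis_elem s 0 \<otimes>\<^bsub>H\<^esub> char_idem G psi) (u, m) = smult_H (psi s) (char_idem G psi) (u, m)"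
    using s n_pos by (auto simp: basis_mult_left_apply char_idem_def smult_H_def)
qed

definition linear_factor :: "'g \<Rightarrow> 'k \<Rightarrow> 'g \<times> nat \<Rightarrow> 'k" where
  "linear_factor s \<zeta> = (\<lambda>w. basis_elem s 0 w - \<zeta> * \<one>\<^bsub>H\<^esub> w)"

lemma linear_factor_apply:
  "linear_factor s \<zeta> (u, m) =
    (if m = 0 then (if u = s then 1 else 0) - (if u = \<one> then \<zeta> else 0) else 0)"
  by (simp add: linear_factor_def one_H_eq_basis basis_elem_apply)

lemma linear_factor_closed: "s \<in> carrier G \<Longrightarrow> linear_factor s \<zeta> \<in> carrier H"
  using n_pos by (auto simp: mem_carrier_H linear_factor_def one_H_eq_basis basis_elem_apply)

lemma char_ker_subset_ideal:
  assumes psi: "lin_char G psi" and J: "ideal J H" and z: "z_elem \<in> J"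
    and factors: "\<And>s. s \<in> carrier G \<Longrightarrow> linear_factor s (psi s) \<in> J"
  shows "char_ker psi \<subseteq> J"
proof
  fix x assume "x \<in> char_ker psi"
  then have x: "x \<in> carrier H" and x0: "char_hom psi x = 0"
    by (auto simp: char_ker_def)
  define lower where "lower = (\<lambda>w. \<Sum>s\<in>carrier G. x (s, 0) * linear_factor s (psi s) w)"
  define upper where "upper = (\<lambda>(u, m). x (u, Suc m))"
  have lower: "lower \<in> J"
    unfolding lower_def by (rule ideal_lincomb_closed[OF J finite_carrier factors])
  have "upper \<in> carrier H"
    unfolding mem_carrier_H
  proof (intro allI impI)
    fix s i assume "upper (s, i) \<noteq> 0"
    then have "x (s, Suc i) \<noteq> 0" by (simp add: upper_def)
    then show "s \<in> carrier G \<and> i < n" by (metis Suc_lessD carrier_H_vanish[OF x])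
  qed
  then have "upper \<otimes>\<^bsub>H\<^esub> z_elem \<in> J"
    by (rule ideal.I_l_closed[OF J z])
  moreover have "x = lower \<oplus>\<^bsub>H\<^esub> upper \<otimes>\<^bsub>H\<^esub> z_elem"
  proof (rule ext, clarify)
    fix u m
    have "lower (u, m) = (\<Sum>s\<in>carrier G. x (s, 0) * basis_elem s 0 (u, m))
        - basis_elem \<one> 0 (u, m) * char_hom psi x"
      by (simp add: lower_def linear_factor_def one_H_eq_basis char_hom_def right_diff_distrib
          sum_subtractf sum_distrib_left mult_ac)
    also have "\<dots> = (if u \<in> carrier G \<and> m = 0 then x (u, 0) else 0)"
      by (subst sum_eq_single[OF finite_carrier, where a = u]) (auto simp: x0 basis_elem_apply)
    finally show "x (u, m) = (lower \<oplus>\<^bsub>H\<^esub> upper \<otimes>\<^bsub>H\<^esub> z_elem) (u, m)"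
      using carrier_H_vanish[OF x, of u m]
      by (auto simp: add_H z_elem_def basis_mult_right_apply upper_def
          lin_char_one[OF lin_char_chi])
  qed
  ultimately show "x \<in> J"
    using additive_subgroup.a_closed[OF ideal.axioms(1)[OF J] lower] by metis
qed

text \<open>The relation \<open>z s = \<chi>(s) s z\<close> turns \<open>z (g - \<zeta>) - \<chi>(g) (g - \<zeta>) z\<close>
  into a multiple of \<open>z\<close>, nonzero as soon as \<open>\<zeta> \<noteq> 0\<close> and \<open>\<chi>(g) \<noteq> 1\<close>.\<close>
lemma z_commutator_linear_factor:
  assumes n: "1 < n" and g: "g \<in> carrier G"
  shows "z_elem \<otimes>\<^bsub>H\<^esub> linear_factor g \<zeta> \<ominus>\<^bsub>H\<^esub> smult_H (chi g) (linear_factor g \<zeta> \<otimes>\<^bsub>H\<^esub> z_elem)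
    = smult_H (\<zeta> * (chi g - 1)) z_elem"
proof (rule ext, clarify)
  fix u m
  have zl: "(z_elem \<otimes>\<^bsub>H\<^esub> linear_factor g \<zeta>) (u, m) =
      (if u \<in> carrier G \<and> m = 1 then chi u * linear_factor g \<zeta> (u, 0) else 0)"
    using n by (auto simp: z_elem_def basis_mult_left_apply linear_factor_apply)
  have lz: "(linear_factor g \<zeta> \<otimes>\<^bsub>H\<^esub> z_elem) (u, m) =
      (if u \<in> carrier G \<and> m = 1 then linear_factor g \<zeta> (u, 0) else 0)"
    using n by (auto simp: z_elem_def basis_mult_right_apply linear_factor_apply
        lin_char_one[OF lin_char_chi])
  show "(z_elem \<otimes>\<^bsub>H\<^esub> linear_factor g \<zeta> \<ominus>\<^bsub>H\<^esub> smult_H (chi g) (linear_factor g \<zeta> \<otimes>\<^bsub>H\<^esub> z_elem)) (u, m)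
    = smult_H (\<zeta> * (chi g - 1)) z_elem (u, m)"
    unfolding diff_H_apply[OF mult_closed_H smult_H_closed[OF mult_closed_H]]
    unfolding smult_H_def zl lz
    using g by (auto simp: z_elem_def linear_factor_apply basis_elem_apply
        lin_char_one[OF lin_char_chi] algebra_simps)
qed

lemma z_mem_ideal:
  assumes n: "1 < n" and J: "ideal J H" and g: "g \<in> carrier G" and chi_g: "chi g \<noteq> 1"
    and \<zeta>: "\<zeta> \<noteq> 0" and factor: "linear_factor g \<zeta> \<in> J"
  shows "z_elem \<in> J"
proof -
  have "smult_H (\<zeta> * (chi g - 1)) z_elem \<in> J"
    unfolding z_commutator_linear_factor[OF n g, symmetric]
    using linear_factor_closed[OF g] z_elem_closed[OF n]
    by (intro ideal_minus_closed[OF J] ideal.I_r_closed[OF J factor] ideal.I_l_closed[OF J factor]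
        ideal_smult_H_closed[OF J])
  then show ?thesis
    by (rule ideal_smult_H_cancel[OF J, rotated]) (use \<zeta> chi_g in simp)
qed

lemma char_ker_eq_genideal:
  assumes psi: "lin_char G psi" and n: "1 < n" and g: "g \<in> carrier G" and chi_g: "chi g \<noteq> 1"
    and card: "of_nat (card (carrier G)) \<noteq> (0::'k)"
  shows "char_ker psi = Idl\<^bsub>H\<^esub> {\<one>\<^bsub>H\<^esub> \<ominus>\<^bsub>H\<^esub> char_idem G psi}"
proof
  let ?f = "\<one>\<^bsub>H\<^esub> \<ominus>\<^bsub>H\<^esub> char_idem G psi"
  have f: "?f \<in> carrier H"
    using char_idem_closed by simp
  show "Idl\<^bsub>H\<^esub> {?f} \<subseteq> char_ker psi"
    using f completely_prime_char_ker[OF psi] char_idem_closed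
    by (intro H.genideal_minimal)
      (auto simp: completely_prime_def char_ker_def char_hom_diff char_hom_one[OF psi]
        char_hom_char_idem[OF psi card])
  let ?J = "Idl\<^bsub>H\<^esub> {?f}"
  have J: "ideal ?J H" and fJ: "?f \<in> ?J"
    using f by (auto intro: H.genideal_ideal H.genideal_self')
  have factors: "linear_factor s (psi s) \<in> ?J" if s: "s \<in> carrier G" for s
  proof -
    have b: "basis_elem s 0 \<in> carrier H"
      using s n_pos by (rule basis_elem_closed)
    have "basis_elem s 0 \<otimes>\<^bsub>H\<^esub> ?f = basis_elem s 0 \<ominus>\<^bsub>H\<^esub> smult_H (psi s) (char_idem G psi)"
      using b char_idem_closed
      by (simp add: H.minus_eq H.r_distr H.r_minus basis_mult_char_idem[OF psi s])
    then have "linear_factor s (psi s) = basis_elem s 0 \<otimes>\<^bsub>H\<^esub> ?f \<ominus>\<^bsub>H\<^esub> smult_H (psi s) ?f"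
      using b f char_idem_closed
      by (simp add: fun_eq_iff diff_H_apply mult_closed_H smult_H_closed smult_H_apply
          linear_factor_def algebra_simps)
    then show ?thesis
      using b by (simp add: ideal_minus_closed[OF J] ideal.I_l_closed[OF J fJ]
          ideal_smult_H_closed[OF J fJ])
  qed
  show "char_ker psi \<subseteq> ?J"
    using char_ker_subset_ideal[OF psi J _ factors]
      z_mem_ideal[OF n J g chi_g lin_char_nonzero[OF psi g] factors[OF g]] by simp
qed

section \<open>Completely prime ideals of \<open>H\<close>\<close>

lemma completely_prime_z_mem:
  assumes n: "1 < n" and I: "completely_prime H I"
  shows "z_elem \<in> I"
  using completely_prime_nilpotent[OF ring_H I z_elem_closed[OF n], of n] by (simp add: z_elem_pow)

lemma linear_factor_diff:
  "s \<in> carrier G \<Longrightarrow> linear_factor s a \<ominus>\<^bsub>H\<^esub> linear_factor s b = smult_H (b - a) \<one>\<^bsub>H\<^esub>"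
  by (simp add: fun_eq_iff diff_H_apply linear_factor_closed smult_H_apply linear_factor_apply
      one_H_eq_basis basis_elem_apply)

lemma mult_linear_factor_apply:
  assumes s: "s \<in> carrier G"
  shows "(x \<otimes>\<^bsub>H\<^esub> linear_factor s \<zeta>) (u, m) =
    (if u \<in> carrier G \<and> m < n then x (u \<otimes> inv s, m) * chi s ^ m - \<zeta> * x (u, m) else 0)"
proof -
  have "(x \<otimes>\<^bsub>H\<^esub> linear_factor s \<zeta>) (u, m)
      = (x \<otimes>\<^bsub>H\<^esub> basis_elem s 0) (u, m) - \<zeta> * (x \<otimes>\<^bsub>H\<^esub> basis_elem \<one> 0) (u, m)"
    by (simp add: mult_H_apply linear_factor_def one_H_eq_basis sum_subtractf sum_distrib_left
        algebra_simps)
  then show ?thesis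
    using s by (simp add: basis_mult_right_apply lin_char_one[OF lin_char_chi])
qed

lemma linear_factor_mult:
  assumes s: "s \<in> carrier G" and t: "t \<in> carrier G"
  shows "linear_factor (s \<otimes> t) (a * b) =
    linear_factor s a \<otimes>\<^bsub>H\<^esub> basis_elem t 0 \<oplus>\<^bsub>H\<^esub> smult_H a (linear_factor t b)"
proof (rule ext, clarify)
  fix u m
  have "u \<otimes> inv t = s \<longleftrightarrow> u = s \<otimes> t" and "u \<otimes> inv t = \<one> \<longleftrightarrow> u = t" if "u \<in> carrier G"
    using inv_solve_right'[OF s that t] inv_solve_right'[OF one_closed that t] t by auto
  then show "linear_factor (s \<otimes> t) (a * b) (u, m) =
      (linear_factor s a \<otimes>\<^bsub>H\<^esub> basis_elem t 0 \<oplus>\<^bsub>H\<^esub> smult_H a (linear_factor t b)) (u, m)"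
    using s t n_pos
    by (auto simp: add_H smult_H_apply basis_mult_right_apply linear_factor_apply algebra_simps)
qed

lemma completely_prime_linear_factor_unique:
  assumes I: "completely_prime H I" and s: "s \<in> carrier G"
    and a: "linear_factor s a \<in> I" and b: "linear_factor s b \<in> I"
  shows "a = b"
proof (rule ccontr)
  assume "a \<noteq> b"
  have J: "ideal I H" using I by (simp add: completely_prime_def)
  have "smult_H (b - a) \<one>\<^bsub>H\<^esub> \<in> I"
    using ideal_minus_closed[OF J a b] by (simp add: linear_factor_diff[OF s])
  then have "\<one>\<^bsub>H\<^esub> \<in> I"
    by (rule ideal_smult_H_cancel[OF J, rotated]) (use \<open>a \<noteq> b\<close> in simp)
  then show False using completely_prime_one_notin[OF I] by contradiction
qed

lemma completely_prime_linear_factor_nonzero: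
  assumes I: "completely_prime H I" and s: "s \<in> carrier G" and factor: "linear_factor s \<zeta> \<in> I"
  shows "\<zeta> \<noteq> 0"
proof
  assume "\<zeta> = 0"
  then have "basis_elem s 0 \<in> I"
    using factor by (simp add: linear_factor_def)
  then have "basis_elem (inv s) 0 \<otimes>\<^bsub>H\<^esub> basis_elem s 0 \<in> I"
    using I s n_pos by (simp add: completely_prime_def ideal.I_l_closed basis_elem_closed)
  moreover have "basis_elem (inv s) 0 \<otimes>\<^bsub>H\<^esub> basis_elem s 0 = \<one>\<^bsub>H\<^esub>"
    using s n_pos by (simp add: basis_mult one_H_eq_basis smult_H_def)
  ultimately show False using completely_prime_one_notin[OF I] by simp
qed

lemma lin_char_of_completely_prime:
  assumes I: "completely_prime H I"
    and factors: "\<And>s. s \<in> carrier G \<Longrightarrow> linear_factor s (psi s) \<in> I"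
  shows "lin_char G psi"
  unfolding lin_char_def
proof (intro conjI ballI)
  fix s assume s: "s \<in> carrier G"
  show "psi s \<noteq> 0" by (rule completely_prime_linear_factor_nonzero[OF I s factors[OF s]])
next
  fix s t assume s: "s \<in> carrier G" and t: "t \<in> carrier G"
  have J: "ideal I H" using I by (simp add: completely_prime_def)
  have "linear_factor s (psi s) \<otimes>\<^bsub>H\<^esub> basis_elem t 0 \<in> I"
    using t n_pos by (simp add: ideal.I_r_closed[OF J factors[OF s]] basis_elem_closed)
  moreover have "smult_H (psi s) (linear_factor t (psi t)) \<in> I"
    using factors[OF t] by (rule ideal_smult_H_closed[OF J])
  ultimately have "linear_factor (s \<otimes> t) (psi s * psi t) \<in> I"
    by (simp add: linear_factor_mult[OF s t] additive_subgroup.a_closed[OF ideal.axioms(1)[OF J]])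
  then show "psi (s \<otimes> t) = psi s * psi t"
    using completely_prime_linear_factor_unique[OF I _ factors] s t by blast
qed

definition poly_at :: "'g \<Rightarrow> 'k poly \<Rightarrow> 'g \<times> nat \<Rightarrow> 'k" where
  "poly_at s p = (\<lambda>w. \<Sum>i\<le>degree p. Polynomial.coeff p i * basis_elem (s [^] i) 0 w)"

lemma poly_at_bound:
  "degree p \<le> N \<Longrightarrow> poly_at s p w = (\<Sum>i\<le>N. Polynomial.coeff p i * basis_elem (s [^] i) 0 w)"
  unfolding poly_at_def by (rule sum.mono_neutral_left) (auto simp: coeff_eq_0)

lemma poly_at_closed:
  assumes s: "s \<in> carrier G"
  shows "poly_at s p \<in> carrier H"
proof -
  have "poly_at s p (u, m) = 0" if "\<not> (u \<in> carrier G \<and> m < n)" for u m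
    using that s n_pos by (auto simp: poly_at_def basis_elem_apply intro!: sum.neutral)
  then show ?thesis
    unfolding mem_carrier_H by blast
qed

lemma poly_at_apply_Suc: "poly_at s p (u, Suc m) = 0"
  by (simp add: poly_at_def basis_elem_apply)

lemma poly_at_one: "poly_at s 1 = \<one>\<^bsub>H\<^esub>"
  by (simp add: poly_at_def one_H_eq_basis)

lemma poly_at_mult_linear_factor:
  assumes s: "s \<in> carrier G"
  shows "poly_at s (q * [:-\<zeta>, 1:]) = poly_at s q \<otimes>\<^bsub>H\<^esub> linear_factor s \<zeta>"
proof (rule ext, clarify)
  fix u m
  let ?d = "degree q"
  let ?e = "\<lambda>p i. Polynomial.coeff p i * basis_elem (s [^] i) 0 (u, m)"
  have "poly_at s (q * [:-\<zeta>, 1:]) (u, m) = (\<Sum>i\<le>Suc ?d. ?e (q * [:-\<zeta>, 1:]) i)"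
    using degree_mult_le[of q "[:-\<zeta>, 1:]"] by (intro poly_at_bound) simp
  also have "\<dots> = (\<Sum>i\<le>Suc ?d. ?e (pCons 0 q) i) - \<zeta> * (\<Sum>i\<le>Suc ?d. ?e q i)"
    by (simp add: sum_subtractf sum_distrib_left algebra_simps)
  also have "(\<Sum>i\<le>Suc ?d. ?e q i) = poly_at s q (u, m)"
    by (rule poly_at_bound[symmetric]) simp
  also have "(\<Sum>i\<le>Suc ?d. ?e (pCons 0 q) i) =
      (\<Sum>i\<le>?d. Polynomial.coeff q i * basis_elem (s [^] Suc i) 0 (u, m))"
    by (subst sum.atMost_Suc_shift) simp
  also have "\<dots> = (if u \<in> carrier G then poly_at s q (u \<otimes> inv s, m) else 0)"
  proof (cases "u \<in> carrier G")
    case True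
    have "u = s [^] i \<otimes> s \<longleftrightarrow> u \<otimes> inv s = s [^] i" for i :: nat
      using inv_solve_right[of "s [^] i" u s] nat_pow_closed[OF s, of i] s True by auto
    then show ?thesis
      using True by (simp add: poly_at_def basis_elem_apply)
  next
    case False
    then show ?thesis
      using s by (auto simp: basis_elem_apply intro!: sum.neutral)
  qed
  finally show "poly_at s (q * [:-\<zeta>, 1:]) (u, m) = (poly_at s q \<otimes>\<^bsub>H\<^esub> linear_factor s \<zeta>) (u, m)"
    using s n_pos carrier_H_vanish[OF poly_at_closed[OF s], of u m]
      poly_at_apply_Suc[of s q _ "m - 1"]
    by (cases m) (auto simp: mult_linear_factor_apply)
qed

lemma poly_at_root_of_unity:
  assumes "s [^] N = \<one>"
  shows "poly_at s (Polynomial.monom 1 N - 1) = \<zero>\<^bsub>H\<^esub>"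
proof
  fix w
  have "poly_at s (Polynomial.monom 1 N - 1) w =
      (\<Sum>i\<le>N. Polynomial.coeff (Polynomial.monom 1 N - 1) i * basis_elem (s [^] i) 0 w)"
    by (rule poly_at_bound) (simp add: degree_diff_le degree_monom_le)
  also have "\<dots> = 0"
  proof -
    have "Polynomial.coeff (Polynomial.monom 1 N - 1) i * x =
        (if i = N then x else 0) - (if i = 0 then x else 0)" for i and x :: 'k
      by auto
    then show ?thesis
      using assms by (simp add: sum_subtractf)
  qed
  finally show "poly_at s (Polynomial.monom 1 N - 1) w = \<zero>\<^bsub>H\<^esub> w"
    by (simp add: zero_H)
qed

lemma completely_prime_linear_factor_of_prod:
  assumes I: "completely_prime H I" and s: "s \<in> carrier G"
    and "poly_at s (\<Prod>\<zeta>\<in>#A. [:-\<zeta>, 1:]) \<in> I"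
  shows "\<exists>\<zeta>\<in>#A. linear_factor s \<zeta> \<in> I"
  using assms(3)
proof (induction A)
  case empty
  then show ?case using completely_prime_one_notin[OF I] by (simp add: poly_at_one)
next
  case (add \<zeta> A)
  then have "poly_at s (\<Prod>\<zeta>\<in>#A. [:-\<zeta>, 1:]) \<otimes>\<^bsub>H\<^esub> linear_factor s \<zeta> \<in> I"
    by (simp add: poly_at_mult_linear_factor[OF s, symmetric] mult.commute)
  then have "poly_at s (\<Prod>\<zeta>\<in>#A. [:-\<zeta>, 1:]) \<in> I \<or> linear_factor s \<zeta> \<in> I"
    by (rule completely_prime_mult_mem[OF I poly_at_closed[OF s] linear_factor_closed[OF s]])
  then show ?case using add.IH by auto
qed

end

locale H_algebra_closed = H_algebra G chi n
  for G :: "('g, 'm) monoid_scheme" (structure) and chi :: "'g \<Rightarrow> 'k::alg_closed_field" and n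
begin

lemma completely_prime_linear_factor_ex:
  assumes I: "completely_prime H I" and s: "s \<in> carrier G"
  shows "\<exists>\<zeta>. linear_factor s \<zeta> \<in> I"
proof -
  define N where "N = order G"
  have N: "0 < N"
    using finite_carrier by (auto simp: N_def order_def card_gt_0_iff)
  define p :: "'k poly" where "p = Polynomial.monom 1 N - 1"
  have "degree p = N"
    using N unfolding p_def diff_conv_add_uminus
    by (subst degree_add_eq_left) (simp_all add: degree_monom_eq)
  then have "lead_coeff p = 1"
    using N by (simp add: p_def)
  then obtain A where "p = (\<Prod>\<zeta>\<in>#A. [:-\<zeta>, 1:])"
    using alg_closed_imp_factorization[of p] by force
  moreover have "poly_at s p \<in> I"
    using poly_at_root_of_unity[OF pow_order_eq_1[OF s]] I
    by (simp add: p_def N_def completely_prime_def additive_subgroup.zero_closed ideal.axioms(1))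
  ultimately show ?thesis
    using completely_prime_linear_factor_of_prod[OF I s] by blast
qed

lemma completely_prime_eq_char_ker:
  assumes n: "1 < n" and I: "completely_prime H I"
  shows "\<exists>psi. lin_char G psi \<and> I = char_ker psi"
proof -
  define psi where "psi s = (SOME \<zeta>. linear_factor s \<zeta> \<in> I)" for s
  have factors: "linear_factor s (psi s) \<in> I" if "s \<in> carrier G" for s
    unfolding psi_def using completely_prime_linear_factor_ex[OF I that] by (rule someI_ex)
  have psi: "lin_char G psi"
    by (rule lin_char_of_completely_prime[OF I factors])
  have J: "ideal I H"
    using I by (simp add: completely_prime_def)
  have "I = char_ker psi"
    using char_ker_maximal[OF psi J completely_prime_one_notin[OF I]
        char_ker_subset_ideal[OF psi J completely_prime_z_mem[OF n I] factors]] .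
  with psi show ?thesis by blast
qed

lemma completely_prime_iff_char_ker:
  "1 < n \<Longrightarrow> completely_prime H I \<longleftrightarrow> (\<exists>psi. lin_char G psi \<and> I = char_ker psi)"
  using completely_prime_eq_char_ker completely_prime_char_ker by blast

end

theorem theorem4p6:
  fixes G :: "('g, 'm) monoid_scheme"
    and chi :: "'g \<Rightarrow> 'k::{alg_closed_field, field_char_0}"
    and g :: 'g and n :: nat and I :: "('g \<times> nat \<Rightarrow> 'k) set"
  assumes "group G" and "finite (carrier G)"
    and "lin_char G chi"
    and "g \<in> carrier G" and "\<forall>s\<in>carrier G. g \<otimes>\<^bsub>G\<^esub> s = s \<otimes>\<^bsub>G\<^esub> g"
    and "is_mult_order (chi g) n" and "n \<ge> 2"
  shows "completely_prime (H_alg G chi n) I \<longleftrightarrow>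
    (\<exists>psi. lin_char G psi \<and>
       I = Idl\<^bsub>H_alg G chi n\<^esub> {\<one>\<^bsub>H_alg G chi n\<^esub> \<ominus>\<^bsub>H_alg G chi n\<^esub> char_idem G psi})"
proof -
  interpret H_algebra_closed G chi n
    using assms by (simp add: H_algebra_closed_def H_algebra_def H_algebra_axioms_def)
  have n: "1 < n"
    using \<open>n \<ge> 2\<close> by simp
  have chi_g: "chi g \<noteq> 1"
    using assms(6) n unfolding is_mult_order_def by (metis power_one_right zero_less_one)
  have card: "of_nat (card (carrier G)) \<noteq> (0::'k)"
    using assms(2) by (auto simp: card_eq_0_iff)
  show ?thesis
    using completely_prime_iff_char_ker[OF n, of I] char_ker_eq_genideal[OF _ n assms(4) chi_g card]
    by auto
qed

end
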